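(* Let $f$ be any function of unitation on $\{0,1\}^n$, $\sigma=1$, $\kappa\in\mathbb{N}$ and $\mu\geq (n+1)\cdot\kappa$, and assume that the search points $0^n$ and $1^n$ are contained in the population of the $(\mu+1)$ EA with phenotypic clearing with clearing radius $\sigma$, niche capacity $\kappa$ and population size $\mu$ running on $f$. Then the expected time (number of generations) until all niches are found, i.e., until for every $i\in\{0,\dots,n\}$ the population contains a search point with exactly $i$ ones, is $O(\mu n)$.
   Context: A function of unitation is $f:\{0,1\}^n\to\mathbb{R}$ with $f(x)=u(|x|_1)$ for some $u:\{0,\dots,n\}\to\mathbb{R}^+$, where $|x|_1$ is the number of 1-bits of $x$; fitness values are assumed positive. Niche $i$ is the set of search points with exactly $i$ ones. The $(\mu+1)$ EA with clearing (population size $\mu$, clearing radius $\sigma$, niche capacity $\kappa$, distance function $\mathrm{d}$): $P_0$ consists of $\mu$ bit strings chosen independently and uniformly at random. In generation $t$: choose a parent $x\in P_t$ uniformly at random; create $y$ by flipping each bit of $x$ independently with probability $1/n$; let $P_t^*=P_t\cup\{y\}$; update the fitness values of $P_t^*$ by the clearing procedure: sort $P_t^*$ by decreasing fitness; for $i=1,\dots,|P_t^*|$, if the current fitness of $P[i]$ is positive, set $w:=1$ and for $j=i+1,\dots,|P_t^*|$: if the current fitness of $P[j]$ is positive and $\mathrm{d}(P[i],P[j])<\sigma$ then, if $w<\kappa$ set $w:=w+1$, else set the fitness of $P[j]$ to $0$. Individuals whose fitness is not reset are winners, the others are cleared. Then choose $z\in P_t$ with worst (cleared) fitness uniformly at random;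 if the (cleared) fitness of $y$ is at least that of $z$, set $P_{t+1}=P_t^*\setminus\{z\}$, otherwise $P_{t+1}=P_t^*\setminus\{y\}$. Phenotypic clearing uses $\mathrm{d}(x,y)=\big||x|_1-|y|_1\big|$. *)

theory Defs
  imports "HOL-Probability.Probability"
begin

type_synonym bits = "bool list"

definition ones :: "bits \<Rightarrow> nat" where
  "ones x = count_list x True"

definition unit_fit :: "(nat \<Rightarrow> real) \<Rightarrow> bits \<Rightarrow> real" where
  "unit_fit u x = u (ones x)"

definition pheno_dist :: "bits \<Rightarrow> bits \<Rightarrow> nat" where
  "pheno_dist x y = (if ones y \<le> ones x then ones x - ones y else ones y - ones x)"

definition valid_sort :: "(bits \<Rightarrow> real) \<Rightarrow> (bits list \<Rightarrow> nat list) \<Rightarrow> bool" where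
  "valid_sort f srt \<longleftrightarrow> (\<forall>Q. distinct (srt Q) \<and> set (srt Q) = {..<length Q} \<and>
      sorted_wrt (\<lambda>a b. f (Q ! b) \<le> f (Q ! a)) (srt Q))"

text \<open>Inner loop of clearing (over j), state = (w, current fitness of each index).\<close>
definition clear_inner_step ::
  "(bits \<Rightarrow> bits \<Rightarrow> nat) \<Rightarrow> nat \<Rightarrow> nat \<Rightarrow> bits list \<Rightarrow> nat \<Rightarrow> nat
    \<Rightarrow> nat \<times> (nat \<Rightarrow> real) \<Rightarrow> nat \<times> (nat \<Rightarrow> real)" where
  "clear_inner_step d \<sigma> \<kappa> Q a j st = (case st of (w, fit) \<Rightarrow>
     if fit j > 0 \<and> d (Q ! a) (Q ! j) < \<sigma>
     then (if w < \<kappa> then (w + 1, fit) else (w, fit(j := 0)))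
     else (w, fit))"

fun clear_outer ::
  "(bits \<Rightarrow> bits \<Rightarrow> nat) \<Rightarrow> nat \<Rightarrow> nat \<Rightarrow> bits list \<Rightarrow> nat list
    \<Rightarrow> (nat \<Rightarrow> real) \<Rightarrow> (nat \<Rightarrow> real)" where
  "clear_outer d \<sigma> \<kappa> Q [] fit = fit"
| "clear_outer d \<sigma> \<kappa> Q (a # rest) fit =
     clear_outer d \<sigma> \<kappa> Q rest
       (if fit a > 0 then snd (fold (clear_inner_step d \<sigma> \<kappa> Q a) rest (1, fit)) else fit)"

definition clearing ::
  "(bits \<Rightarrow> real) \<Rightarrow> (bits list \<Rightarrow> nat list) \<Rightarrow> (bits \<Rightarrow> bits \<Rightarrow> nat) \<Rightarrow> nat \<Rightarrow> nat
    \<Rightarrow> bits list \<Rightarrow> nat \<Rightarrow> real" where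
  "clearing f srt d \<sigma> \<kappa> Q = clear_outer d \<sigma> \<kappa> Q (srt Q) (\<lambda>j. f (Q ! j))"

fun mutate :: "real \<Rightarrow> bits \<Rightarrow> bits pmf" where
  "mutate p [] = return_pmf []"
| "mutate p (b # bs) =
     bind_pmf (bernoulli_pmf p) (\<lambda>c. bind_pmf (mutate p bs) (\<lambda>r.
       return_pmf ((if c then \<not> b else b) # r)))"

text \<open>One generation of the (mu+1) EA with clearing. Populations are lists of length mu;
  P* = P @ [y] (index mu is the offspring).\<close>
definition ea_step ::
  "(bits \<Rightarrow> real) \<Rightarrow> (bits list \<Rightarrow> nat list) \<Rightarrow> (bits \<Rightarrow> bits \<Rightarrow> nat) \<Rightarrow> nat \<Rightarrow> nat
    \<Rightarrow> nat \<Rightarrow> nat \<Rightarrow> bits list \<Rightarrow> bits list pmf" where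
  "ea_step f srt d \<sigma> \<kappa> \<mu> n P =
     bind_pmf (pmf_of_set {..<\<mu>}) (\<lambda>i.
     bind_pmf (mutate (1 / real n) (P ! i)) (\<lambda>y.
       let Ps = P @ [y];
           cf = clearing f srt d \<sigma> \<kappa> Ps;
           worst = Min (cf ` {..<\<mu>})
       in bind_pmf (pmf_of_set {k. k < \<mu> \<and> cf k = worst}) (\<lambda>k.
            return_pmf (if cf k \<le> cf \<mu> then take k Ps @ drop (Suc k) Ps else P))))"

definition all_niches_found :: "nat \<Rightarrow> bits list \<Rightarrow> bool" where
  "all_niches_found n P \<longleftrightarrow> (\<forall>i\<le>n. \<exists>x\<in>set P. ones x = i)"

definition stopped_step :: "('a \<Rightarrow> bool) \<Rightarrow> ('a \<Rightarrow> 'a pmf) \<Rightarrow> 'a \<Rightarrow> 'a pmf" where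
  "stopped_step G K P = (if G P then return_pmf P else K P)"

fun pop_dist :: "('a \<Rightarrow> 'a pmf) \<Rightarrow> nat \<Rightarrow> 'a \<Rightarrow> 'a pmf" where
  "pop_dist K 0 P = return_pmf P"
| "pop_dist K (Suc t) P = bind_pmf (pop_dist K t P) K"

text \<open>E[T] = sum over t of Pr[T > t], T the first time t with G(P_t).\<close>
definition expected_hitting_time :: "('a \<Rightarrow> 'a pmf) \<Rightarrow> ('a \<Rightarrow> bool) \<Rightarrow> 'a \<Rightarrow> ennreal" where
  "expected_hitting_time K G P0 =
     (\<Sum>t. ennreal (measure_pmf.prob (pop_dist (stopped_step G K) t P0) {P. \<not> G P}))"

end

theory Submission
  imports Defs
begin

text \<open>With \<open>\<sigma> = 1\<close> the niches of clearing are the levels of unitation, and each level keeps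
  at most \<open>\<kappa>\<close> winners. Since \<open>\<mu> + 1 > (n + 1) \<kappa>\<close>, some member of \<open>P \<union> {y}\<close> is
  cleared, and every cleared individual has a winner on its own level. Hence the replaced
  individual never carries the last copy of a level, and an offspring on a new level is a winner
  that replaces a cleared individual: the set of occupied levels never shrinks. While a level is
  missing, there is a parent next to a gap with at least \<open>n/2\<close> bits whose flip moves it into
  the gap; choosing it (\<open>1/\<mu>\<close>) and flipping exactly one such bit (\<open>\<ge> 1/(2e)\<close>) discovers a new
  level with probability at least \<open>1/(2e\<mu>)\<close>. At most \<open>n - 1\<close> levels are missing at the start,
  so the fitness-level argument gives an expected time of at most \<open>2e\<mu>n\<close>.\<close>

section \<open>Probability mass functions and bit mutation\<close>

lemma measure_bind_pmf:
  "measure_pmf.prob (bind_pmf M N) A = (\<integral>x. measure_pmf.prob (N x) A \<partial>M)"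
proof -
  have "ennreal (measure_pmf.prob (bind_pmf M N) A) = (\<integral>\<^sup>+x. ennreal (measure_pmf.prob (N x) A) \<partial>M)"
    by (simp add: measure_pmf.emeasure_eq_measure[symmetric])
  also have "\<dots> = ennreal (\<integral>x. measure_pmf.prob (N x) A \<partial>M)"
    by (rule nn_integral_eq_integral) (auto intro!: measure_pmf.integrable_const_bound[where B=1])
  finally show ?thesis by (simp add: integral_nonneg_AE)
qed

lemma measure_bind_pmf_ge:
  assumes "\<And>y. y \<in> set_pmf M \<Longrightarrow> y \<in> A \<Longrightarrow> set_pmf (N y) \<subseteq> E"
  shows "measure_pmf.prob M A \<le> measure_pmf.prob (bind_pmf M N) E"
proof -
  have "indicator A y \<le> measure_pmf.prob (N y) E" if "y \<in> set_pmf M" for y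
  proof (cases "y \<in> A")
    case True
    then have "measure_pmf.prob (N y) E = 1"
      using assms[OF that] by (simp add: measure_pmf.prob_eq_1 AE_measure_pmf_iff subset_eq)
    then show ?thesis by simp
  qed simp
  then have "(\<integral>y. indicator A y \<partial>M) \<le> (\<integral>y. measure_pmf.prob (N y) E \<partial>M)"
    by (intro integral_mono_AE AE_pmfI)
      (auto intro!: measure_pmf.integrable_const_bound[where B=1])
  then show ?thesis by (simp add: measure_bind_pmf)
qed

lemma measure_bind_pmf_of_set_ge:
  assumes "finite S" "i \<in> S"
  shows "measure_pmf.prob (N i) E / card S \<le> measure_pmf.prob (bind_pmf (pmf_of_set S) N) E"
proof -
  have "measure_pmf.prob (N i) E \<le> (\<Sum>j\<in>S. measure_pmf.prob (N j) E)"
    using assms by (intro member_le_sum) auto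
  moreover have "S \<noteq> {}"
    using assms by auto
  ultimately show ?thesis
    using assms by (simp add: measure_bind_pmf integral_pmf_of_set divide_right_mono)
qed

lemma length_mutate: "y \<in> set_pmf (mutate p x) \<Longrightarrow> length y = length x"
  by (induction x arbitrary: y) auto

lemma measure_mutate_Cons:
  assumes "0 \<le> p" "p \<le> 1"
  shows "measure_pmf.prob (mutate p (b # bs)) A =
     p * measure_pmf.prob (mutate p bs) {r. (\<not> b) # r \<in> A}
     + (1 - p) * measure_pmf.prob (mutate p bs) {r. b # r \<in> A}"
proof -
  have "bind_pmf (mutate p bs) (\<lambda>r. return_pmf ((if c then \<not> b else b) # r))
      = map_pmf (\<lambda>r. (if c then \<not> b else b) # r) (mutate p bs)" for c
    by (simp add: map_pmf_def)
  then show ?thesis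
    using assms by (simp add: measure_bind_pmf vimage_def algebra_simps)
qed

lemma measure_mutate_count_unchanged:
  fixes p :: real
  assumes "0 \<le> p" "p \<le> 1"
  shows "(1 - p) ^ length x \<le> measure_pmf.prob (mutate p x) {r. count_list r v = count_list x v}"
proof (induction x)
  case (Cons b bs)
  have "(1 - p) ^ length (b # bs)
      \<le> (1 - p) * measure_pmf.prob (mutate p bs) {r. count_list r v = count_list bs v}"
    using Cons assms by (simp add: mult_left_mono)
  also have "\<dots> \<le> measure_pmf.prob (mutate p (b # bs)) {r. count_list r v = count_list (b # bs) v}"
    using assms by (subst measure_mutate_Cons[OF assms]) (simp add: mult_nonneg_nonneg)
  finally show ?case .
qed simp

lemma measure_mutate_count_Suc:
  fixes p :: real
  assumes "0 \<le> p" "p \<le> 1"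
  shows "count_list x (\<not> v) * p * (1 - p) ^ (length x - 1)
    \<le> measure_pmf.prob (mutate p x) {r. count_list r v = count_list x v + 1}"
proof (induction x)
  case (Cons b bs)
  let ?prob = "measure_pmf.prob (mutate p bs)"
  have keep: "(1 - p) * (count_list bs (\<not> v) * p * (1 - p) ^ (length bs - 1))
      \<le> (1 - p) * ?prob {r. count_list r v = count_list bs v + 1}"
    using Cons assms by (intro mult_left_mono) auto
  have flip: "(if b = (\<not> v) then p * (1 - p) ^ length bs else 0)
      \<le> p * ?prob {r. count_list ((\<not> b) # r) v = count_list (b # bs) v + 1}"
    using assms measure_mutate_count_unchanged[OF assms, of bs v]
    by (auto intro: mult_left_mono)
  have "count_list bs (\<not> v) * p * (1 - p) ^ length bs
      = (1 - p) * (count_list bs (\<not> v) * p * (1 - p) ^ (length bs - 1))"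
    by (cases "length bs") auto
  moreover have "count_list (b # bs) (\<not> v) * p * (1 - p) ^ (length (b # bs) - 1)
      = count_list bs (\<not> v) * p * (1 - p) ^ length bs
        + (if b = (\<not> v) then p * (1 - p) ^ length bs else 0)"
    by (simp add: algebra_simps)
  ultimately have "count_list (b # bs) (\<not> v) * p * (1 - p) ^ (length (b # bs) - 1)
      \<le> (1 - p) * ?prob {r. count_list r v = count_list bs v + 1}
        + p * ?prob {r. count_list ((\<not> b) # r) v = count_list (b # bs) v + 1}"
    using keep flip by linarith
  also have "\<dots> = measure_pmf.prob (mutate p (b # bs)) {r. count_list r v = count_list (b # bs) v + 1}"
    using assms by (subst measure_mutate_Cons[OF assms]) simp
  finally show ?case .
qed simp

lemma exp_minus_one_le_power:
  assumes "1 \<le> n"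
  shows "exp (-1) \<le> (1 - 1 / real n) ^ (n - 1)"
proof (cases "n = 1")
  case False
  define m where "m = n - 1"
  have m: "1 \<le> m" "real n = real m + 1"
    using assms False by (auto simp: m_def)
  have "(1 + 1 / real m) ^ m \<le> exp (1 / real m) ^ m"
    by (intro power_mono) (use exp_ge_add_one_self[of "1 / real m"] in auto)
  also have "\<dots> = exp 1"
    using m by (simp add: exp_of_nat_mult[symmetric])
  moreover have "0 < (1 + 1 / real m) ^ m"
    by (simp add: add_pos_nonneg)
  ultimately have "1 / exp 1 \<le> 1 / (1 + 1 / real m) ^ m"
    by (intro divide_left_mono) auto
  also have "\<dots> = (1 - 1 / real n) ^ (n - 1)"
  proof -
    have "1 - 1 / real n = 1 / (1 + 1 / real m)"
      using m by (simp add: field_simps)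
    then show ?thesis by (simp add: m_def power_one_over)
  qed
  finally show ?thesis by (simp add: exp_minus inverse_eq_divide)
qed simp

lemma measure_mutate_next_level_ge:
  assumes "1 \<le> length x" "length x \<le> 2 * count_list x (\<not> v)"
  shows "1 / (2 * exp 1)
    \<le> measure_pmf.prob (mutate (1 / length x) x) {r. count_list r v = count_list x v + 1}"
proof -
  define n p where "n = length x" and "p = 1 / real n"
  have "1 \<le> real n"
    using assms by (simp add: n_def)
  then have p: "0 \<le> p" "p \<le> 1"
    by (auto simp: p_def)
  have "real n \<le> 2 * count_list x (\<not> v)"
    using assms(2) unfolding n_def by (metis of_nat_le_iff of_nat_mult of_nat_numeral)
  then have "1 / 2 \<le> count_list x (\<not> v) * p"
    using \<open>1 \<le> real n\<close> by (simp add: p_def field_simps)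
  moreover have "exp (-1) \<le> (1 - p) ^ (n - 1)"
    using exp_minus_one_le_power assms by (simp add: p_def n_def)
  ultimately have "1 / 2 * exp (-1) \<le> count_list x (\<not> v) * p * (1 - p) ^ (n - 1)"
    by (intro mult_mono) auto
  also have "\<dots> \<le> measure_pmf.prob (mutate p x) {r. count_list r v = count_list x v + 1}"
    using measure_mutate_count_Suc[OF p] by (simp add: n_def)
  finally show ?thesis
    by (simp add: p_def n_def exp_minus field_simps)
qed

section \<open>Expected hitting times by fitness levels\<close>

text \<open>If \<open>h\<close> drops by at least one in expectation in every step taken outside \<open>G\<close>, then
  the number of steps so far plus the expected value of \<open>h\<close> is nonincreasing along the stopped
  process; this bounds every partial sum of \<open>Pr[T > t]\<close> by \<open>h P0\<close>.\<close>

lemma expected_hitting_time_le_potential: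
  fixes K :: "'a \<Rightarrow> 'a pmf" and h :: "'a \<Rightarrow> ennreal"
  assumes closed: "\<And>P Q. Inv P \<Longrightarrow> \<not> G P \<Longrightarrow> Q \<in> set_pmf (K P) \<Longrightarrow> Inv Q"
    and drift: "\<And>P. Inv P \<Longrightarrow> \<not> G P \<Longrightarrow> 1 + (\<integral>\<^sup>+Q. h Q \<partial>K P) \<le> h P"
    and "Inv P0"
  shows "expected_hitting_time K G P0 \<le> h P0"
proof -
  define SK where "SK = stopped_step G K"
  define a where "a t = ennreal (measure_pmf.prob (pop_dist SK t P0) {P. \<not> G P})" for t
  have inv: "Inv Q" if "Q \<in> set_pmf (pop_dist SK t P0)" for Q t
    using that
  proof (induction t arbitrary: Q)
    case (Suc t)
    then show ?case
      using closed by (auto simp: SK_def stopped_step_def split: if_splits)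
  qed (simp add: \<open>Inv P0\<close>)
  have step: "indicator {P. \<not> G P} P + (\<integral>\<^sup>+Q. h Q \<partial>SK P) \<le> h P" if "Inv P" for P
    using drift[OF that] by (cases "G P") (simp_all add: SK_def stopped_step_def)
  have partial: "(\<Sum>s<t. a s) + (\<integral>\<^sup>+Q. h Q \<partial>pop_dist SK t P0) \<le> h P0" for t
  proof (induction t)
    case (Suc t)
    have "a t + (\<integral>\<^sup>+Q. h Q \<partial>pop_dist SK (Suc t) P0)
        = (\<integral>\<^sup>+Q. indicator {P. \<not> G P} Q + (\<integral>\<^sup>+R. h R \<partial>SK Q) \<partial>pop_dist SK t P0)"
      by (simp add: a_def measure_pmf.emeasure_eq_measure[symmetric] nn_integral_add)
    also have "\<dots> \<le> (\<integral>\<^sup>+Q. h Q \<partial>pop_dist SK t P0)"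
      using inv step by (intro nn_integral_mono_AE AE_pmfI) auto
    finally have "(\<Sum>s<Suc t. a s) + (\<integral>\<^sup>+Q. h Q \<partial>pop_dist SK (Suc t) P0)
        \<le> (\<Sum>s<t. a s) + (\<integral>\<^sup>+Q. h Q \<partial>pop_dist SK t P0)"
      by (simp add: add.assoc add_left_mono)
    then show ?case
      using Suc.IH by (rule order_trans)
  qed simp
  have "(\<Sum>s<t. a s) \<le> h P0" for t
    using partial[of t] by (rule order_trans[rotated]) simp
  then show ?thesis
    unfolding expected_hitting_time_def a_def[symmetric] SK_def[symmetric]
    by (intro suminf_le_const) auto
qed

lemma fitness_level_drift:
  fixes M :: "'a pmf" and \<Phi> :: "'a \<Rightarrow> nat"
  assumes "0 < p" and mono: "\<And>Q. Q \<in> set_pmf M \<Longrightarrow> \<Phi> P \<le> \<Phi> Q \<and> \<Phi> Q \<le> m"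
    and progress: "p \<le> measure_pmf.prob M {Q. \<Phi> P < \<Phi> Q}"
  shows "1 + (\<integral>\<^sup>+Q. ennreal ((real m - \<Phi> Q) / p) \<partial>M) \<le> ennreal ((real m - \<Phi> P) / p)"
proof -
  let ?h = "\<lambda>Q. ennreal ((real m - \<Phi> Q) / p)" and ?up = "{Q. \<Phi> P < \<Phi> Q}"
  have pointwise: "?h Q + ennreal (1 / p) * indicator ?up Q \<le> ?h P" if "Q \<in> set_pmf M" for Q
  proof (cases "Q \<in> ?up")
    case True
    have "?h Q + ennreal (1 / p) = ennreal ((real m - \<Phi> Q + 1) / p)"
      using mono[OF that] \<open>0 < p\<close> by (simp add: ennreal_plus[symmetric] add_divide_distrib del: ennreal_plus)
    also have "\<dots> \<le> ?h P"
      using True \<open>0 < p\<close> by (intro ennreal_leI divide_right_mono) auto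
    finally show ?thesis
      using True by simp
  next
    case False
    then show ?thesis
      using mono[OF that] \<open>0 < p\<close> by (auto intro!: ennreal_leI divide_right_mono)
  qed
  have "1 \<le> ennreal (1 / p) * emeasure (measure_pmf M) ?up"
    using progress \<open>0 < p\<close>
    by (simp add: measure_pmf.emeasure_eq_measure ennreal_mult[symmetric] ennreal_1[symmetric]
        field_simps del: ennreal_1)
  then have "1 + (\<integral>\<^sup>+Q. ?h Q \<partial>M) \<le> (\<integral>\<^sup>+Q. ?h Q + ennreal (1 / p) * indicator ?up Q \<partial>M)"
    by (simp add: nn_integral_add nn_integral_cmult add.commute add_left_mono)
  also have "\<dots> \<le> (\<integral>\<^sup>+Q. ?h P \<partial>M)"
    using pointwise by (intro nn_integral_mono_AE AE_pmfI)
  finally show ?thesis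
    by (simp add: measure_pmf.emeasure_space_1)
qed

lemma expected_hitting_time_fitness_levels:
  fixes K :: "'a \<Rightarrow> 'a pmf" and \<Phi> :: "'a \<Rightarrow> nat"
  assumes "0 < p"
    and closed: "\<And>P Q. Inv P \<Longrightarrow> \<not> G P \<Longrightarrow> Q \<in> set_pmf (K P) \<Longrightarrow> Inv Q \<and> \<Phi> P \<le> \<Phi> Q"
    and bounded: "\<And>P. Inv P \<Longrightarrow> \<Phi> P \<le> m"
    and progress: "\<And>P. Inv P \<Longrightarrow> \<not> G P \<Longrightarrow> p \<le> measure_pmf.prob (K P) {Q. \<Phi> P < \<Phi> Q}"
    and "Inv P0"
  shows "expected_hitting_time K G P0 \<le> ennreal ((real m - \<Phi> P0) / p)"
proof (rule expected_hitting_time_le_potential[where Inv = Inv])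
  fix P assume "Inv P" "\<not> G P"
  then show "1 + (\<integral>\<^sup>+Q. ennreal ((real m - \<Phi> Q) / p) \<partial>K P) \<le> ennreal ((real m - \<Phi> P) / p)"
    using closed bounded progress \<open>0 < p\<close> by (intro fitness_level_drift) auto
qed (use closed \<open>Inv P0\<close> in blast)+

section \<open>Clearing with niches given by a labelling of the indices\<close>

locale niche_clearing =
  fixes d :: "bits \<Rightarrow> bits \<Rightarrow> nat" and \<sigma> \<kappa> :: nat and Q :: "bits list" and N :: "nat \<Rightarrow> nat"
  assumes close_iff_same_niche: "d (Q ! a) (Q ! j) < \<sigma> \<longleftrightarrow> N a = N j"
    and capacity_pos: "1 \<le> \<kappa>"
begin

definition clear_round :: "nat \<Rightarrow> nat list \<Rightarrow> (nat \<Rightarrow> real) \<Rightarrow> nat \<Rightarrow> real" where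
  "clear_round a R fit =
     (if 0 < fit a then snd (fold (clear_inner_step d \<sigma> \<kappa> Q a) R (1, fit)) else fit)"

lemma clear_outer_Cons:
  "clear_outer d \<sigma> \<kappa> Q (a # R) fit = clear_outer d \<sigma> \<kappa> Q R (clear_round a R fit)"
  by (simp add: clear_round_def)

lemma clear_inner_step_eq:
  "clear_inner_step d \<sigma> \<kappa> Q a j (w, fit) =
     (if 0 < fit j \<and> N a = N j
      then (if w < \<kappa> then (w + 1, fit) else (w, fit(j := 0))) else (w, fit))"
  by (simp add: clear_inner_step_def close_iff_same_niche)

lemma fold_clear_inner_step_changes:
  assumes "fold (clear_inner_step d \<sigma> \<kappa> Q a) R (w, fit) = (w', fit')"
  shows "fit' j = fit j \<or> (fit' j = 0 \<and> j \<in> set R \<and> 0 < fit j \<and> N a = N j)"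
  using assms
proof (induction R arbitrary: w fit)
  case (Cons x R)
  show ?case
    using Cons.IH[of "fst (clear_inner_step d \<sigma> \<kappa> Q a x (w, fit))"
        "snd (clear_inner_step d \<sigma> \<kappa> Q a x (w, fit))"] Cons.prems
    by (auto simp: clear_inner_step_eq split: if_splits)
qed simp

lemma fold_clear_inner_step_capacity:
  assumes "fold (clear_inner_step d \<sigma> \<kappa> Q a) R (w, fit) = (w', fit')" "distinct R" "w \<le> \<kappa>"
  shows "card {j \<in> set R. N a = N j \<and> 0 < fit' j} + w \<le> \<kappa>"
  using assms
proof (induction R arbitrary: w fit)
  case (Cons x R)
  let ?S = "{j \<in> set R. N a = N j \<and> 0 < fit' j}"
  have "x \<notin> set R" "distinct R"
    using Cons.prems by auto
  show ?case
  proof (cases "0 < fit x \<and> N a = N x \<and> w < \<kappa>")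
    case True
    then have "fold (clear_inner_step d \<sigma> \<kappa> Q a) R (w + 1, fit) = (w', fit')"
      using Cons.prems by (simp add: clear_inner_step_eq)
    moreover have "w + 1 \<le> \<kappa>"
      using True by simp
    ultimately have "card ?S + (w + 1) \<le> \<kappa>"
      using Cons.IH \<open>distinct R\<close> by blast
    have "card {j \<in> set (x # R). N a = N j \<and> 0 < fit' j} \<le> card (insert x ?S)"
      by (rule card_mono) auto
    also have "\<dots> \<le> card ?S + 1"
      by (simp add: card_insert_if)
    finally show ?thesis
      using \<open>card ?S + (w + 1) \<le> \<kappa>\<close> by simp
  next
    case False
    define fit1 where "fit1 = (if 0 < fit x \<and> N a = N x then fit(x := 0) else fit)"
    have fold1: "fold (clear_inner_step d \<sigma> \<kappa> Q a) R (w, fit1) = (w', fit')"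
      using Cons.prems False by (auto simp: clear_inner_step_eq fit1_def)
    have "\<not> (N a = N x \<and> 0 < fit' x)"
      using fold_clear_inner_step_changes[OF fold1, of x] False \<open>x \<notin> set R\<close>
      by (auto simp: fit1_def)
    then have "{j \<in> set (x # R). N a = N j \<and> 0 < fit' j} = ?S"
      by auto
    then show ?thesis
      using Cons.IH[OF fold1] \<open>distinct R\<close> Cons.prems(3) by simp
  qed
qed simp

lemma clear_round_changes:
  "clear_round a R fit j = fit j
   \<or> (clear_round a R fit j = 0 \<and> j \<in> set R \<and> 0 < fit j \<and> N a = N j)"
  using fold_clear_inner_step_changes[of a R 1 fit]
  by (cases "fold (clear_inner_step d \<sigma> \<kappa> Q a) R (1, fit)") (auto simp: clear_round_def)

lemma clear_round_capacity:
  assumes "distinct R" "0 < fit a"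
  shows "card {j \<in> set R. N a = N j \<and> 0 < clear_round a R fit j} + 1 \<le> \<kappa>"
  using fold_clear_inner_step_capacity[of a R 1 fit] assms capacity_pos
  by (cases "fold (clear_inner_step d \<sigma> \<kappa> Q a) R (1, fit)") (auto simp: clear_round_def)

lemma clear_outer_values:
  assumes "\<forall>j. fit j = 0 \<or> fit j = f0 j"
  shows "clear_outer d \<sigma> \<kappa> Q R fit j = 0 \<or> clear_outer d \<sigma> \<kappa> Q R fit j = f0 j"
  using assms
proof (induction R arbitrary: fit)
  case (Cons a R)
  have "\<forall>j. clear_round a R fit j = 0 \<or> clear_round a R fit j = f0 j"
    using Cons.prems clear_round_changes[of a R fit] by metis
  then show ?case
    unfolding clear_outer_Cons using Cons.IH by blast
qed simp

text \<open>Invariants of the outer loop: \<open>D\<close> is the set of indices already processed, \<open>U\<close> the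
  set of all indices.\<close>

definition cleared_have_winner :: "nat set \<Rightarrow> nat set \<Rightarrow> (nat \<Rightarrow> real) \<Rightarrow> bool" where
  "cleared_have_winner D U fit \<longleftrightarrow>
     (\<forall>j\<in>U. fit j = 0 \<longrightarrow> (\<exists>j'\<in>D. j' \<noteq> j \<and> N j' = N j \<and> 0 < fit j'))"

definition winners_capped :: "nat set \<Rightarrow> nat set \<Rightarrow> (nat \<Rightarrow> real) \<Rightarrow> bool" where
  "winners_capped D U fit \<longleftrightarrow>
     (\<forall>j\<in>D. 0 < fit j \<longrightarrow> card {j' \<in> U. N j' = N j \<and> 0 < fit j'} \<le> \<kappa>)"

lemma cleared_have_winner_round:
  assumes "cleared_have_winner D U fit" "a \<notin> set R" "set R \<inter> D = {}"
  shows "cleared_have_winner (insert a D) U (clear_round a R fit)"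
  unfolding cleared_have_winner_def
proof (intro ballI impI)
  fix j assume "j \<in> U" and cleared: "clear_round a R fit j = 0"
  show "\<exists>j'\<in>insert a D. j' \<noteq> j \<and> N j' = N j \<and> 0 < clear_round a R fit j'"
  proof (cases "clear_round a R fit j = fit j")
    case True
    then obtain j' where "j' \<in> D" "j' \<noteq> j" "N j' = N j" "0 < fit j'"
      using assms(1) \<open>j \<in> U\<close> cleared unfolding cleared_have_winner_def by auto
    moreover have "clear_round a R fit j' = fit j'"
      using clear_round_changes[of a R fit j'] \<open>j' \<in> D\<close> assms(3) by auto
    ultimately show ?thesis by auto
  next
    case False
    then have "j \<in> set R" "N a = N j"
      using clear_round_changes[of a R fit j] by auto
    moreover have "0 < fit a"
      using False by (cases "0 < fit a") (auto simp: clear_round_def)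
    moreover have "clear_round a R fit a = fit a"
      using clear_round_changes[of a R fit a] assms(2) by auto
    ultimately show ?thesis
      using assms(2) by auto
  qed
qed

lemma winners_capped_round:
  assumes capped: "winners_capped D (insert a D \<union> set R) fit"
    and "finite D" "distinct R" "a \<notin> set R" "set R \<inter> D = {}"
  shows "winners_capped (insert a D) (insert a D \<union> set R) (clear_round a R fit)"
  unfolding winners_capped_def
proof (intro ballI impI)
  let ?U = "insert a D \<union> set R" and ?fit1 = "clear_round a R fit"
  have fin: "finite ?U"
    using \<open>finite D\<close> by simp
  have pos: "0 < ?fit1 j \<Longrightarrow> 0 < fit j" for j
    using clear_round_changes[of a R fit j] by auto
  have kept: "j \<notin> set R \<Longrightarrow> ?fit1 j = fit j" for j
    using clear_round_changes[of a R fit j] by auto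
  fix j assume j: "j \<in> insert a D" "0 < ?fit1 j"
  show "card {j' \<in> ?U. N j' = N j \<and> 0 < ?fit1 j'} \<le> \<kappa>"
  proof (cases "\<exists>i\<in>D. N i = N j \<and> 0 < fit i")
    case True
    then obtain i where "i \<in> D" "N i = N j" "0 < fit i"
      by blast
    have "card {j' \<in> ?U. N j' = N j \<and> 0 < ?fit1 j'} \<le> card {j' \<in> ?U. N j' = N i \<and> 0 < fit j'}"
      using fin pos \<open>N i = N j\<close> by (intro card_mono) auto
    also have "\<dots> \<le> \<kappa>"
      using capped \<open>i \<in> D\<close> \<open>0 < fit i\<close> unfolding winners_capped_def by blast
    finally show ?thesis .
  next
    case False
    have "j \<notin> D"
      using False j kept assms(5) by fastforce
    then have "j = a" "0 < fit a"
      using j kept assms(4) by auto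
    have "{j' \<in> ?U. N j' = N j \<and> 0 < ?fit1 j'}
        \<subseteq> insert a {j' \<in> set R. N a = N j' \<and> 0 < ?fit1 j'}"
      using False pos \<open>j = a\<close> by auto
    then have "card {j' \<in> ?U. N j' = N j \<and> 0 < ?fit1 j'}
        \<le> card (insert a {j' \<in> set R. N a = N j' \<and> 0 < ?fit1 j'})"
      by (intro card_mono) auto
    also have "\<dots> \<le> card {j' \<in> set R. N a = N j' \<and> 0 < ?fit1 j'} + 1"
      by (simp add: card_insert_if)
    also have "\<dots> \<le> \<kappa>"
      using clear_round_capacity \<open>distinct R\<close> \<open>0 < fit a\<close> by blast
    finally show ?thesis .
  qed
qed

lemma clear_outer_invariants:
  assumes "distinct R" "set R \<inter> D = {}" "finite D"
    and "cleared_have_winner D (D \<union> set R) fit" "winners_capped D (D \<union> set R) fit"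
  shows "cleared_have_winner (D \<union> set R) (D \<union> set R) (clear_outer d \<sigma> \<kappa> Q R fit)
    \<and> winners_capped (D \<union> set R) (D \<union> set R) (clear_outer d \<sigma> \<kappa> Q R fit)"
  using assms
proof (induction R arbitrary: D fit)
  case (Cons a R)
  have U: "insert a D \<union> set R = D \<union> set (a # R)"
    by auto
  have "cleared_have_winner (insert a D) (insert a D \<union> set R) (clear_round a R fit)"
    using Cons.prems U by (intro cleared_have_winner_round) auto
  moreover have "winners_capped (insert a D) (insert a D \<union> set R) (clear_round a R fit)"
    using Cons.prems U by (intro winners_capped_round) auto
  ultimately show ?case
    using Cons.IH[of "insert a D" "clear_round a R fit"] Cons.prems
    unfolding clear_outer_Cons U by auto
qed simp

lemma clearing_value:
  "clearing f srt d \<sigma> \<kappa> Q j = 0 \<or> clearing f srt d \<sigma> \<kappa> Q j = f (Q ! j)"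
  unfolding clearing_def by (rule clear_outer_values) simp

text \<open>Only that \<open>srt Q\<close> enumerates the indices of \<open>Q\<close> is used, not the order.\<close>

context
  fixes f :: "bits \<Rightarrow> real" and srt :: "bits list \<Rightarrow> nat list"
  assumes sort: "valid_sort f srt" and fitness_pos: "\<forall>j<length Q. 0 < f (Q ! j)"
begin

lemma clearing_invariants:
  "cleared_have_winner {..<length Q} {..<length Q} (clearing f srt d \<sigma> \<kappa> Q)
   \<and> winners_capped {..<length Q} {..<length Q} (clearing f srt d \<sigma> \<kappa> Q)"
proof -
  have "distinct (srt Q)" "set (srt Q) = {..<length Q}"
    using sort by (auto simp: valid_sort_def)
  then show ?thesis
    using clear_outer_invariants[of "srt Q" "{}" "\<lambda>j. f (Q ! j)"] fitness_pos
    by (auto simp: clearing_def cleared_have_winner_def winners_capped_def less_imp_neq[symmetric])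
qed

lemma clearing_cleared_has_winner:
  assumes "j < length Q" "clearing f srt d \<sigma> \<kappa> Q j = 0"
  shows "\<exists>j'<length Q. j' \<noteq> j \<and> N j' = N j \<and> 0 < clearing f srt d \<sigma> \<kappa> Q j'"
  using clearing_invariants assms unfolding cleared_have_winner_def by auto

lemma card_clearing_winners_le:
  "card {j. j < length Q \<and> N j = c \<and> 0 < clearing f srt d \<sigma> \<kappa> Q j} \<le> \<kappa>"
proof (cases "\<exists>j<length Q. N j = c \<and> 0 < clearing f srt d \<sigma> \<kappa> Q j")
  case True
  then obtain j where "j < length Q" "N j = c" "0 < clearing f srt d \<sigma> \<kappa> Q j"
    by blast
  then show ?thesis
    using clearing_invariants unfolding winners_capped_def by auto
next
  case False
  then have "{j. j < length Q \<and> N j = c \<and> 0 < clearing f srt d \<sigma> \<kappa> Q j} = {}"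
    by blast
  then show ?thesis by (simp only: card.empty le0)
qed

text \<open>Pigeonhole: at most \<open>\<kappa>\<close> winners in each of the \<open>m + 1\<close> niches.\<close>

lemma clearing_exists_cleared:
  assumes "\<forall>j<length Q. N j \<le> m" "(m + 1) * \<kappa> < length Q"
  shows "\<exists>j<length Q. clearing f srt d \<sigma> \<kappa> Q j = 0"
proof (rule ccontr)
  assume "\<not> ?thesis"
  then have "0 < clearing f srt d \<sigma> \<kappa> Q j" if "j < length Q" for j
    using clearing_value[of f srt j] fitness_pos that by force
  then have "{..<length Q}
      \<subseteq> (\<Union>c\<in>{..m}. {j. j < length Q \<and> N j = c \<and> 0 < clearing f srt d \<sigma> \<kappa> Q j})"
    using assms(1) by auto
  then have "card {..<length Q}
      \<le> card (\<Union>c\<in>{..m}. {j. j < length Q \<and> N j = c \<and> 0 < clearing f srt d \<sigma> \<kappa> Q j})"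
    by (intro card_mono) auto
  also have "\<dots> \<le> (\<Sum>c\<in>{..m}. card {j. j < length Q \<and> N j = c \<and> 0 < clearing f srt d \<sigma> \<kappa> Q j})"
    by (rule card_UN_le) simp
  also have "\<dots> \<le> (m + 1) * \<kappa>"
    using sum_mono[of "{..m}" _ "\<lambda>_. \<kappa>", OF card_clearing_winners_le] by simp
  finally show False
    using assms(2) by simp
qed

end

end

section \<open>One generation of the EA with phenotypic clearing\<close>

definition clearing_selection ::
  "(bits \<Rightarrow> real) \<Rightarrow> (bits list \<Rightarrow> nat list) \<Rightarrow> (bits \<Rightarrow> bits \<Rightarrow> nat) \<Rightarrow> nat \<Rightarrow> nat
    \<Rightarrow> nat \<Rightarrow> bits list \<Rightarrow> bits \<Rightarrow> bits list pmf" where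
  "clearing_selection f srt d \<sigma> \<kappa> \<mu> P y =
     (let Ps = P @ [y];
          cf = clearing f srt d \<sigma> \<kappa> Ps;
          worst = Min (cf ` {..<\<mu>})
      in bind_pmf (pmf_of_set {k. k < \<mu> \<and> cf k = worst}) (\<lambda>k.
           return_pmf (if cf k \<le> cf \<mu> then take k Ps @ drop (Suc k) Ps else P)))"

lemma ea_step_eq_bind_selection:
  "ea_step f srt d \<sigma> \<kappa> \<mu> n P =
     bind_pmf (pmf_of_set {..<\<mu>}) (\<lambda>i.
       bind_pmf (mutate (1 / real n) (P ! i)) (clearing_selection f srt d \<sigma> \<kappa> \<mu> P))"
  unfolding ea_step_def clearing_selection_def ..

lemma nth_in_set_take_drop:
  assumes "j < length L" "j \<noteq> k"
  shows "L ! j \<in> set (take k L @ drop (Suc k) L)"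
proof (cases "j < k")
  case True
  then have "take k L ! j = L ! j" "j < length (take k L)"
    using assms by auto
  then show ?thesis by (metis UnI1 nth_mem set_append)
next
  case False
  then have "drop (Suc k) L ! (j - Suc k) = L ! j" "j - Suc k < length (drop (Suc k) L)"
    using assms by auto
  then show ?thesis by (metis UnI2 nth_mem set_append)
qed

lemma ones_le_length: "ones x \<le> length x"
  unfolding ones_def by (induction x) auto

lemma ones_replicate: "ones (replicate n b) = (if b then n else 0)"
  unfolding ones_def by (induction n) auto

lemma count_list_True_plus_False: "count_list x True + count_list x False = length x"
  by (induction x) auto

lemma pheno_dist_less_one_iff: "pheno_dist x y < 1 \<longleftrightarrow> ones x = ones y"
  unfolding pheno_dist_def by auto

lemma population_size_pos: "1 \<le> \<kappa> \<Longrightarrow> (n + 1) * \<kappa> \<le> \<mu> \<Longrightarrow> 0 < (\<mu>::nat)"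
  by (simp add: mult_le_cancel1 order.strict_trans2)

locale ea_selection =
  fixes n \<kappa> \<mu> :: nat and u :: "nat \<Rightarrow> real" and srt :: "bits list \<Rightarrow> nat list"
    and P :: "bits list" and y :: bits
  assumes capacity_pos: "1 \<le> \<kappa>" and pop_size: "(n + 1) * \<kappa> \<le> \<mu>"
    and fitness_pos: "\<forall>i\<le>n. 0 < u i" and sort: "valid_sort (unit_fit u) srt"
    and length_P: "length P = \<mu>" and lengths_P: "\<forall>x\<in>set P. length x = n"
    and length_y: "length y = n"
begin

definition Ps :: "bits list" where
  "Ps = P @ [y]"

definition cf :: "nat \<Rightarrow> real" where
  "cf = clearing (unit_fit u) srt pheno_dist 1 \<kappa> Ps"

lemma length_Ps: "length Ps = Suc \<mu>"
  using length_P by (simp add: Ps_def)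

lemma Ps_nth_parent: "j < \<mu> \<Longrightarrow> Ps ! j = P ! j"
  using length_P by (simp add: Ps_def nth_append)

lemma Ps_nth_offspring: "Ps ! \<mu> = y"
  using length_P by (simp add: Ps_def nth_append)

lemma lengths_Ps: "x \<in> set Ps \<Longrightarrow> length x = n"
  using lengths_P length_y by (auto simp: Ps_def)

sublocale niche_clearing pheno_dist 1 \<kappa> Ps "\<lambda>j. ones (Ps ! j)"
  by unfold_locales (rule pheno_dist_less_one_iff capacity_pos)+

lemma ones_Ps_le: "j < Suc \<mu> \<Longrightarrow> ones (Ps ! j) \<le> n"
  using lengths_Ps ones_le_length length_Ps by (metis nth_mem)

lemma fitness_Ps_pos: "\<forall>j<length Ps. 0 < unit_fit u (Ps ! j)"
  using fitness_pos ones_Ps_le length_Ps by (simp add: unit_fit_def)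

lemma cf_cases: "j < Suc \<mu> \<Longrightarrow> cf j = 0 \<or> 0 < cf j"
  using clearing_value[of "unit_fit u" srt j] fitness_Ps_pos length_Ps by (auto simp: cf_def)

lemma exists_cleared: "\<exists>j<Suc \<mu>. cf j = 0"
  using clearing_exists_cleared[OF sort fitness_Ps_pos, of n] pop_size ones_Ps_le length_Ps
  by (simp add: cf_def)

lemma cleared_has_twin:
  assumes "j < Suc \<mu>" "cf j = 0"
  shows "\<exists>j'<Suc \<mu>. j' \<noteq> j \<and> ones (Ps ! j') = ones (Ps ! j)"
  using clearing_cleared_has_winner[OF sort fitness_Ps_pos, of j] assms length_Ps
  by (auto simp: cf_def)

lemma selection_outcome:
  assumes "Q \<in> set_pmf (clearing_selection (unit_fit u) srt pheno_dist 1 \<kappa> \<mu> P y)"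
  shows "\<exists>k<\<mu>. (\<forall>i<\<mu>. cf k \<le> cf i)
    \<and> Q = (if cf k \<le> cf \<mu> then take k Ps @ drop (Suc k) Ps else P)"
proof -
  define W where "W = {k. k < \<mu> \<and> cf k = Min (cf ` {..<\<mu>})}"
  have "0 < \<mu>"
    by (rule population_size_pos[OF capacity_pos pop_size])
  then have "Min (cf ` {..<\<mu>}) \<in> cf ` {..<\<mu>}"
    by (intro Min_in) auto
  then have "W \<noteq> {}" "finite W"
    by (auto simp: W_def)
  moreover have "clearing_selection (unit_fit u) srt pheno_dist 1 \<kappa> \<mu> P y
      = bind_pmf (pmf_of_set W) (\<lambda>k.
          return_pmf (if cf k \<le> cf \<mu> then take k Ps @ drop (Suc k) Ps else P))"
    unfolding clearing_selection_def Let_def W_def cf_def Ps_def ..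
  ultimately obtain k where "k \<in> W" "Q = (if cf k \<le> cf \<mu> then take k Ps @ drop (Suc k) Ps else P)"
    using assms by auto
  then show ?thesis
    by (auto simp: W_def)
qed

lemma replaced_is_cleared:
  assumes "k < \<mu>" "\<forall>i<\<mu>. cf k \<le> cf i" "cf k \<le> cf \<mu>"
  shows "cf k = 0"
proof -
  obtain j where "j < Suc \<mu>" "cf j = 0"
    using exists_cleared by blast
  then have "cf k \<le> 0"
    using assms by (metis less_SucE)
  then show ?thesis
    using cf_cases[of k] assms(1) by auto
qed

lemma remove_cleared_keeps_niches:
  assumes "k < Suc \<mu>" "cf k = 0"
  shows "ones ` set Ps \<subseteq> ones ` set (take k Ps @ drop (Suc k) Ps)"
proof -
  obtain j where j: "j < Suc \<mu>" "j \<noteq> k" "ones (Ps ! j) = ones (Ps ! k)"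
    using cleared_has_twin assms by blast
  have "set Ps = insert (Ps ! k) (set (take k Ps @ drop (Suc k) Ps))"
    using id_take_nth_drop[of k Ps] assms(1) length_Ps by (metis list.simps(15) set_append Un_insert_right)
  moreover have "Ps ! j \<in> set (take k Ps @ drop (Suc k) Ps)"
    using nth_in_set_take_drop[of j Ps k] j length_Ps by simp
  then have "ones (Ps ! k) \<in> ones ` set (take k Ps @ drop (Suc k) Ps)"
    using j(3) by (metis image_eqI)
  ultimately show ?thesis
    by auto
qed

lemma new_niche_offspring_wins:
  assumes "ones y \<notin> ones ` set P"
  shows "0 < cf \<mu>"
proof (rule ccontr)
  assume "\<not> 0 < cf \<mu>"
  then obtain j where "j < \<mu>" "ones (P ! j) = ones y"
    using cf_cases[of \<mu>] cleared_has_twin[of \<mu>] Ps_nth_parent Ps_nth_offspring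
    by (metis less_Suc_eq lessI)
  then show False
    using assms length_P by (metis image_eqI nth_mem)
qed

lemma selection_shape:
  assumes "Q \<in> set_pmf (clearing_selection (unit_fit u) srt pheno_dist 1 \<kappa> \<mu> P y)"
  shows "length Q = \<mu> \<and> (\<forall>x\<in>set Q. length x = n)"
proof -
  obtain k where "k < \<mu>" "Q = take k Ps @ drop (Suc k) Ps \<or> Q = P"
    using selection_outcome[OF assms] by metis
  moreover have "set (take k Ps @ drop (Suc k) Ps) \<subseteq> set Ps"
    by (auto dest: in_set_takeD in_set_dropD)
  ultimately show ?thesis
    using length_P lengths_P length_Ps lengths_Ps by fastforce
qed

lemma selection_keeps_niches:
  assumes "Q \<in> set_pmf (clearing_selection (unit_fit u) srt pheno_dist 1 \<kappa> \<mu> P y)"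
  shows "ones ` set P \<subseteq> ones ` set Q"
proof -
  obtain k where k: "k < \<mu>" "\<forall>i<\<mu>. cf k \<le> cf i"
    and Q: "Q = (if cf k \<le> cf \<mu> then take k Ps @ drop (Suc k) Ps else P)"
    using selection_outcome[OF assms] by blast
  show ?thesis
  proof (cases "cf k \<le> cf \<mu>")
    case True
    then have "ones ` set Ps \<subseteq> ones ` set Q"
      using Q k replaced_is_cleared remove_cleared_keeps_niches by simp
    then show ?thesis
      by (auto simp: Ps_def)
  qed (use Q in simp)
qed

lemma selection_accepts_new_niche:
  assumes "Q \<in> set_pmf (clearing_selection (unit_fit u) srt pheno_dist 1 \<kappa> \<mu> P y)"
    and new: "ones y \<notin> ones ` set P"
  shows "ones y \<in> ones ` set Q"
proof -
  obtain k where k: "k < \<mu>" "\<forall>i<\<mu>. cf k \<le> cf i"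
    and Q: "Q = (if cf k \<le> cf \<mu> then take k Ps @ drop (Suc k) Ps else P)"
    using selection_outcome[OF assms(1)] by blast
  have "0 < cf \<mu>"
    using new_niche_offspring_wins[OF new] .
  moreover obtain j where "j < Suc \<mu>" "cf j = 0"
    using exists_cleared by blast
  ultimately have "cf k \<le> 0"
    using k by (metis less_SucE less_irrefl)
  then have "Q = take k Ps @ drop (Suc k) Ps"
    using Q \<open>0 < cf \<mu>\<close> by simp
  then have "y \<in> set Q"
    using nth_in_set_take_drop[of \<mu> Ps k] k(1) length_Ps Ps_nth_offspring by simp
  then show ?thesis by blast
qed

end

section \<open>Finding all niches\<close>

definition population_with_extremes :: "nat \<Rightarrow> nat \<Rightarrow> bits list \<Rightarrow> bool" where
  "population_with_extremes n \<mu> P \<longleftrightarrow>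
     length P = \<mu> \<and> (\<forall>x\<in>set P. length x = n) \<and> 0 \<in> ones ` set P \<and> n \<in> ones ` set P"

lemma card_niches_population_with_extremes:
  assumes "population_with_extremes n \<mu> P" "1 \<le> n"
  shows "2 \<le> card (ones ` set P) \<and> card (ones ` set P) \<le> n + 1"
proof -
  have "ones x \<le> n" if "x \<in> set P" for x
    using assms(1) ones_le_length[of x] that unfolding population_with_extremes_def by auto
  then have "ones ` set P \<subseteq> {..n}"
    by auto
  moreover have "{0, n} \<subseteq> ones ` set P"
    using assms(1) unfolding population_with_extremes_def by auto
  ultimately show ?thesis
    using assms(2) card_mono[of "ones ` set P" "{0, n}"] card_mono[of "{..n}" "ones ` set P"]
    by auto
qed

text \<open>The lowest missing level has its lower neighbour present and the highest one its upper
  neighbour; one of the two neighbours lies on the side of \<open>n/2\<close> facing the gap.\<close>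

lemma missing_level_next_to_found:
  fixes F :: "nat set"
  assumes "0 \<in> F" "n \<in> F" "i \<le> n" "i \<notin> F"
  shows "\<exists>j\<le>n. j \<notin> F \<and>
    ((0 < j \<and> j - 1 \<in> F \<and> n \<le> 2 * (n - (j - 1))) \<or> (j + 1 \<in> F \<and> n \<le> 2 * (j + 1)))"
proof -
  define U where "U = {j. j \<le> n \<and> j \<notin> F}"
  have U: "finite U" "i \<in> U"
    using assms by (auto simp: U_def)
  define a b where "a = Min U" and "b = Max U"
  have "a \<in> U" "b \<in> U"
    using U by (auto simp: a_def b_def intro!: Min_in Max_in)
  then have "a \<le> b"
    using U(1) by (simp add: a_def)
  have "0 < a"
    using \<open>a \<in> U\<close> assms(1) by (auto simp: U_def intro: gr0I)
  have "a - 1 \<in> F"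
    using \<open>0 < a\<close> \<open>a \<in> U\<close> Min_le[OF U(1), of "a - 1"] by (fastforce simp: U_def a_def)
  have "b < n"
    using \<open>b \<in> U\<close> assms(2) by (auto simp: U_def order.order_iff_strict)
  have "b + 1 \<in> F"
    using \<open>b < n\<close> Max_ge[OF U(1), of "b + 1"] by (fastforce simp: U_def b_def)
  show ?thesis
  proof (cases "n \<le> 2 * (n - (a - 1))")
    case True
    then show ?thesis
      using \<open>a \<in> U\<close> \<open>0 < a\<close> \<open>a - 1 \<in> F\<close> by (auto simp: U_def)
  next
    case False
    then show ?thesis
      using \<open>b \<in> U\<close> \<open>b + 1 \<in> F\<close> \<open>a \<le> b\<close> by (auto simp: U_def)
  qed
qed

lemma mutation_to_missing_niche:
  assumes pop: "population_with_extremes n \<mu> P" and "1 \<le> n" and missing: "\<not> all_niches_found n P"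
  shows "\<exists>x\<in>set P. 1 / (2 * exp 1)
    \<le> measure_pmf.prob (mutate (1 / real n) x) {r. ones r \<notin> ones ` set P}"
proof -
  let ?F = "ones ` set P"
  have lengths: "\<forall>x\<in>set P. length x = n" and "0 \<in> ?F" "n \<in> ?F"
    using pop by (auto simp: population_with_extremes_def)
  obtain i where "i \<le> n" "i \<notin> ?F"
    using missing by (auto simp: all_niches_found_def)
  then obtain j where "j \<le> n" "j \<notin> ?F" and
    near: "(0 < j \<and> j - 1 \<in> ?F \<and> n \<le> 2 * (n - (j - 1))) \<or> (j + 1 \<in> ?F \<and> n \<le> 2 * (j + 1))"
    using missing_level_next_to_found[OF \<open>0 \<in> ?F\<close> \<open>n \<in> ?F\<close>] by blast
  then obtain x v where x: "x \<in> set P" "n \<le> 2 * count_list x (\<not> v)"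
    and level: "\<And>r. length r = n \<Longrightarrow> count_list r v = count_list x v + 1 \<Longrightarrow> ones r = j"
  proof (elim disjE conjE)
    assume "0 < j" "j - 1 \<in> ?F" "n \<le> 2 * (n - (j - 1))"
    then obtain x where "x \<in> set P" "ones x = j - 1"
      by auto
    then show thesis
      using that[of x True] lengths \<open>0 < j\<close> \<open>n \<le> 2 * (n - (j - 1))\<close>
        count_list_True_plus_False[of x] by (auto simp: ones_def)
  next
    assume "j + 1 \<in> ?F" "n \<le> 2 * (j + 1)"
    then obtain x where "x \<in> set P" "ones x = j + 1"
      by auto
    moreover have "ones r = j" if "length r = n" "count_list r False = count_list x False + 1" for r
      using count_list_True_plus_False[of r] count_list_True_plus_False[of x] that lengths
        \<open>x \<in> set P\<close> \<open>ones x = j + 1\<close> by (simp add: ones_def)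
    ultimately show thesis
      using that[of x False] \<open>n \<le> 2 * (j + 1)\<close> by (simp add: ones_def)
  qed
  have "{r. count_list r v = count_list x v + 1} \<inter> set_pmf (mutate (1 / real n) x)
      \<subseteq> {r. ones r \<notin> ?F}"
    using level length_mutate lengths x(1) \<open>j \<notin> ?F\<close> by fastforce
  then have "measure_pmf.prob (mutate (1 / real n) x) {r. count_list r v = count_list x v + 1}
      \<le> measure_pmf.prob (mutate (1 / real n) x) {r. ones r \<notin> ?F}"
    using measure_pmf.finite_measure_mono measure_Int_set_pmf by (metis sets_measure_pmf UNIV_I)
  moreover have "1 / (2 * exp 1)
      \<le> measure_pmf.prob (mutate (1 / real n) x) {r. count_list r v = count_list x v + 1}"
    using measure_mutate_next_level_ge[of x v] lengths x \<open>1 \<le> n\<close> by simp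
  ultimately show ?thesis
    using x(1) by (meson order_trans)
qed

context
  fixes n \<kappa> \<mu> :: nat and u :: "nat \<Rightarrow> real" and srt :: "bits list \<Rightarrow> nat list"
  assumes capacity_pos: "1 \<le> \<kappa>" and pop_size: "(n + 1) * \<kappa> \<le> \<mu>"
    and fitness_pos: "\<forall>i\<le>n. 0 < u i" and sort: "valid_sort (unit_fit u) srt"
begin

lemma ea_selection_offspring:
  assumes "population_with_extremes n \<mu> P" "i < \<mu>" "y \<in> set_pmf (mutate (1 / real n) (P ! i))"
  shows "ea_selection n \<kappa> \<mu> u srt P y"
proof
  show "length y = n"
    using assms length_mutate nth_mem unfolding population_with_extremes_def by metis
qed (use assms capacity_pos pop_size fitness_pos sort in \<open>auto simp: population_with_extremes_def\<close>)

lemma ea_step_support: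
  assumes pop: "population_with_extremes n \<mu> P"
    and "Q \<in> set_pmf (ea_step (unit_fit u) srt pheno_dist 1 \<kappa> \<mu> n P)"
  shows "population_with_extremes n \<mu> Q \<and> ones ` set P \<subseteq> ones ` set Q"
proof -
  have "0 < \<mu>"
    by (rule population_size_pos[OF capacity_pos pop_size])
  then obtain i y where "i < \<mu>" "y \<in> set_pmf (mutate (1 / real n) (P ! i))"
    and Q: "Q \<in> set_pmf (clearing_selection (unit_fit u) srt pheno_dist 1 \<kappa> \<mu> P y)"
    using assms(2) by (auto simp: ea_step_eq_bind_selection lessThan_empty_iff)
  then interpret ea_selection n \<kappa> \<mu> u srt P y
    using ea_selection_offspring pop by blast
  show ?thesis
    using selection_shape[OF Q] selection_keeps_niches[OF Q] pop
    unfolding population_with_extremes_def by blast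
qed

lemma ea_step_new_niche_prob:
  assumes pop: "population_with_extremes n \<mu> P" and "1 \<le> n" and "\<not> all_niches_found n P"
  shows "1 / (2 * exp 1 * \<mu>)
    \<le> measure_pmf.prob (ea_step (unit_fit u) srt pheno_dist 1 \<kappa> \<mu> n P)
        {Q. ones ` set P \<subset> ones ` set Q}"
proof -
  let ?E = "{Q. ones ` set P \<subset> ones ` set Q}"
  obtain x where "x \<in> set P"
    and x: "1 / (2 * exp 1) \<le> measure_pmf.prob (mutate (1 / real n) x) {r. ones r \<notin> ones ` set P}"
    using mutation_to_missing_niche[OF assms] by blast
  then obtain i where i: "i < \<mu>" "P ! i = x"
    using pop by (auto simp: population_with_extremes_def in_set_conv_nth)
  have sel: "measure_pmf.prob (mutate (1 / real n) x) {r. ones r \<notin> ones ` set P}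
      \<le> measure_pmf.prob (bind_pmf (mutate (1 / real n) (P ! i))
           (clearing_selection (unit_fit u) srt pheno_dist 1 \<kappa> \<mu> P)) ?E"
    unfolding i(2)
  proof (rule measure_bind_pmf_ge)
    fix y assume y: "y \<in> set_pmf (mutate (1 / real n) x)" "y \<in> {r. ones r \<notin> ones ` set P}"
    interpret ea_selection n \<kappa> \<mu> u srt P y
      using ea_selection_offspring pop i y(1) by blast
    show "set_pmf (clearing_selection (unit_fit u) srt pheno_dist 1 \<kappa> \<mu> P y) \<subseteq> ?E"
    proof
      fix Q assume Q: "Q \<in> set_pmf (clearing_selection (unit_fit u) srt pheno_dist 1 \<kappa> \<mu> P y)"
      show "Q \<in> ?E"
        using selection_keeps_niches[OF Q] selection_accepts_new_niche[OF Q] y(2) by auto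
    qed
  qed
  have "1 / (2 * exp 1 * \<mu>) = 1 / (2 * exp 1) / card {..<\<mu>}"
    by simp
  also have "\<dots> \<le> measure_pmf.prob (bind_pmf (mutate (1 / real n) (P ! i))
           (clearing_selection (unit_fit u) srt pheno_dist 1 \<kappa> \<mu> P)) ?E / card {..<\<mu>}"
    using x sel by (intro divide_right_mono) auto
  also have "\<dots> \<le> measure_pmf.prob (ea_step (unit_fit u) srt pheno_dist 1 \<kappa> \<mu> n P) ?E"
    unfolding ea_step_eq_bind_selection using i(1) by (intro measure_bind_pmf_of_set_ge) auto
  finally show ?thesis .
qed

lemma expected_time_all_niches:
  assumes P0: "population_with_extremes n \<mu> P0" and "1 \<le> n"
  shows "expected_hitting_time (ea_step (unit_fit u) srt pheno_dist 1 \<kappa> \<mu> n)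
    (all_niches_found n) P0 \<le> ennreal (2 * exp 1 * \<mu> * n)"
proof -
  let ?\<Phi> = "\<lambda>P. card (ones ` set P)" and ?p = "1 / (2 * exp 1 * \<mu>)"
    and ?K = "ea_step (unit_fit u) srt pheno_dist 1 \<kappa> \<mu> n"
  have "0 < \<mu>"
    by (rule population_size_pos[OF capacity_pos pop_size])
  have "expected_hitting_time ?K (all_niches_found n) P0 \<le> ennreal ((real (n + 1) - ?\<Phi> P0) / ?p)"
  proof (rule expected_hitting_time_fitness_levels[where Inv = "population_with_extremes n \<mu>"])
    fix P Q assume "population_with_extremes n \<mu> P" "Q \<in> set_pmf (?K P)"
    then have "population_with_extremes n \<mu> Q \<and> ones ` set P \<subseteq> ones ` set Q"
      by (rule ea_step_support)
    then show "population_with_extremes n \<mu> Q \<and> ?\<Phi> P \<le> ?\<Phi> Q"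
      by (simp add: card_mono)
  next
    fix P assume "population_with_extremes n \<mu> P"
    then show "?\<Phi> P \<le> n + 1"
      using card_niches_population_with_extremes \<open>1 \<le> n\<close> by blast
  next
    fix P assume "population_with_extremes n \<mu> P" "\<not> all_niches_found n P"
    then have "?p \<le> measure_pmf.prob (?K P) {Q. ones ` set P \<subset> ones ` set Q}"
      using ea_step_new_niche_prob \<open>1 \<le> n\<close> by blast
    also have "\<dots> \<le> measure_pmf.prob (?K P) {Q. ?\<Phi> P < ?\<Phi> Q}"
      by (rule measure_pmf.finite_measure_mono) (auto intro: psubset_card_mono)
    finally show "?p \<le> measure_pmf.prob (?K P) {Q. ?\<Phi> P < ?\<Phi> Q}" .
  qed (use P0 \<open>0 < \<mu>\<close> in auto)
  also have "\<dots> \<le> ennreal (2 * exp 1 * \<mu> * n)"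
  proof (intro ennreal_leI)
    have "real (n + 1) - ?\<Phi> P0 \<le> n"
      using card_niches_population_with_extremes[OF P0 \<open>1 \<le> n\<close>] by simp
    then have "(real (n + 1) - ?\<Phi> P0) * (2 * exp 1 * \<mu>) \<le> n * (2 * exp 1 * \<mu>)"
      by (rule mult_right_mono) simp
    then show "(real (n + 1) - ?\<Phi> P0) / ?p \<le> 2 * exp 1 * \<mu> * n"
      by (simp add: mult.commute)
  qed
  finally show ?thesis .
qed

end
theorem lemma3:
  shows "\<exists>C::real. C > 0 \<and>
    (\<forall>(n::nat) (\<kappa>::nat) (\<mu>::nat) (u::nat \<Rightarrow> real) srt (P0::bits list).
       n \<ge> 1 \<longrightarrow> \<kappa> \<ge> 1 \<longrightarrow> \<mu> \<ge> (n + 1) * \<kappa> \<longrightarrow>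
       (\<forall>i\<le>n. u i > 0) \<longrightarrow> valid_sort (unit_fit u) srt \<longrightarrow>
       length P0 = \<mu> \<longrightarrow> (\<forall>x\<in>set P0. length x = n) \<longrightarrow>
       replicate n False \<in> set P0 \<longrightarrow> replicate n True \<in> set P0 \<longrightarrow>
       expected_hitting_time (ea_step (unit_fit u) srt pheno_dist 1 \<kappa> \<mu> n)
         (all_niches_found n) P0 \<le> ennreal (C * real \<mu> * real n))"
proof (intro exI[of _ "2 * exp 1"] conjI allI impI)
  fix n \<kappa> \<mu> :: nat and u :: "nat \<Rightarrow> real" and srt and P0 :: "bits list"
  assume "n \<ge> 1" and ea: "\<kappa> \<ge> 1" "\<mu> \<ge> (n + 1) * \<kappa>" "\<forall>i\<le>n. u i > 0" "valid_sort (unit_fit u) srt"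
    and "length P0 = \<mu>" "\<forall>x\<in>set P0. length x = n"
    and "replicate n False \<in> set P0" "replicate n True \<in> set P0"
  then have "population_with_extremes n \<mu> P0"
    unfolding population_with_extremes_def by (metis image_eqI ones_replicate)
  then show "expected_hitting_time (ea_step (unit_fit u) srt pheno_dist 1 \<kappa> \<mu> n)
      (all_niches_found n) P0 \<le> ennreal (2 * exp 1 * \<mu> * n)"
    using expected_time_all_niches[OF ea] \<open>n \<ge> 1\<close> by blast
qed simp

end
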